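(* A well-founded order $P$ is up-regular if and only if it has no level-induced suborder isomorphic to $O_{obs1}$ and no level-induced suborder isomorphic to $O_{obs2}$. Consequently every well-founded order with property (itov) is up-regular.
   Context: Orders are partial orders; $x\sim y$ means $x\ne y$ and $x,y$ incomparable. $O_{obs1}$ is the order on $\{a,b,c,d\}$ whose only comparabilities are $a<b$, $c<d$; $O_{obs2}$ is the order on $\{a,b,c,d\}$ whose only comparabilities are $a<b$, $c<d$, $c<b$. Property (itov): no induced suborder isomorphic to $O_{obs1}$ or $O_{obs2}$. For a well-founded order $Q$, $\mathrm{Level}_Q(x)=\sup\{\mathrm{Level}_Q(y)+1:y<x\}$. A level-induced suborder of $P$ is a subset $S$ with induced order $P|_S$ such that for all $x,y\in S$: $\mathrm{Level}_{P|_S}(x)=\mathrm{Level}_{P|_S}(y)$ iff $\mathrm{Level}_P(x)=\mathrm{Level}_P(y)$. An element $x$ of a well-founded order $P$ is up-regular if for all $y,z$ with $\mathrm{Level}_P(x)<\mathrm{Level}_P(y)=\mathrm{Level}_P(z)$ we have $x<y\iff x<z$; $P$ is up-regular if all its elements are. *)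

theory Defs
  imports Main
begin

definition strict_po_on :: "'a set \<Rightarrow> ('a \<Rightarrow> 'a \<Rightarrow> bool) \<Rightarrow> bool" where
  "strict_po_on A r \<longleftrightarrow>
     (\<forall>x\<in>A. \<not> r x x) \<and> (\<forall>x\<in>A. \<forall>y\<in>A. \<forall>z\<in>A. r x y \<longrightarrow> r y z \<longrightarrow> r x z)"

definition wf_order :: "'a set \<Rightarrow> ('a \<Rightarrow> 'a \<Rightarrow> bool) \<Rightarrow> bool" where
  "wf_order A r \<longleftrightarrow> strict_po_on A r \<and> wfP (\<lambda>x y. x \<in> A \<and> y \<in> A \<and> r x y)"

text \<open>Comparison of (ordinal-valued) levels:
  Level(x) \<le> Level(y) iff for every x' < x there is y' < y with Level(x') \<le> Level(y').
  This is the well-founded recursion unfolding Level(x) = sup{Level(x')+1 : x' < x}.\<close>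

inductive level_le :: "'a set \<Rightarrow> ('a \<Rightarrow> 'a \<Rightarrow> bool) \<Rightarrow> 'a \<Rightarrow> 'a \<Rightarrow> bool"
  for A r where
  "\<lbrakk> x \<in> A; y \<in> A;
     \<forall>x'\<in>A. r x' x \<longrightarrow> (\<exists>y'\<in>A. r y' y \<and> level_le A r x' y') \<rbrakk>
   \<Longrightarrow> level_le A r x y"

definition level_eq :: "'a set \<Rightarrow> ('a \<Rightarrow> 'a \<Rightarrow> bool) \<Rightarrow> 'a \<Rightarrow> 'a \<Rightarrow> bool" where
  "level_eq A r x y \<longleftrightarrow> level_le A r x y \<and> level_le A r y x"

definition level_less :: "'a set \<Rightarrow> ('a \<Rightarrow> 'a \<Rightarrow> bool) \<Rightarrow> 'a \<Rightarrow> 'a \<Rightarrow> bool" where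
  "level_less A r x y \<longleftrightarrow> \<not> level_le A r y x"

definition up_regular_elem :: "'a set \<Rightarrow> ('a \<Rightarrow> 'a \<Rightarrow> bool) \<Rightarrow> 'a \<Rightarrow> bool" where
  "up_regular_elem A r x \<longleftrightarrow>
     (\<forall>y\<in>A. \<forall>z\<in>A. level_less A r x y \<and> level_eq A r y z \<longrightarrow> (r x y \<longleftrightarrow> r x z))"

definition up_regular :: "'a set \<Rightarrow> ('a \<Rightarrow> 'a \<Rightarrow> bool) \<Rightarrow> bool" where
  "up_regular A r \<longleftrightarrow> (\<forall>x\<in>A. up_regular_elem A r x)"

definition level_induced :: "'a set \<Rightarrow> ('a \<Rightarrow> 'a \<Rightarrow> bool) \<Rightarrow> 'a set \<Rightarrow> bool" where
  "level_induced A r S \<longleftrightarrow> S \<subseteq> A \<and>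
     (\<forall>x\<in>S. \<forall>y\<in>S. level_eq S r x y \<longleftrightarrow> level_eq A r x y)"

text \<open>The obstructions on {a,b,c,d} encoded as {0,1,2,3}: a=0, b=1, c=2, d=3 (strict relations).\<close>

definition O_obs1 :: "nat \<Rightarrow> nat \<Rightarrow> bool" where
  "O_obs1 i j \<longleftrightarrow> (i, j) \<in> {(0, 1), (2, 3)}"

definition O_obs2 :: "nat \<Rightarrow> nat \<Rightarrow> bool" where
  "O_obs2 i j \<longleftrightarrow> (i, j) \<in> {(0, 1), (2, 3), (2, 1)}"

definition iso_to :: "(nat \<Rightarrow> nat \<Rightarrow> bool) \<Rightarrow> 'a set \<Rightarrow> ('a \<Rightarrow> 'a \<Rightarrow> bool) \<Rightarrow> bool" where
  "iso_to q S r \<longleftrightarrow> (\<exists>f. bij_betw f {0..3} S \<and>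
     (\<forall>i\<in>{0..3}. \<forall>j\<in>{0..3}. q i j \<longleftrightarrow> r (f i) (f j)))"

definition itov :: "'a set \<Rightarrow> ('a \<Rightarrow> 'a \<Rightarrow> bool) \<Rightarrow> bool" where
  "itov A r \<longleftrightarrow> \<not> (\<exists>S\<subseteq>A. iso_to O_obs1 S r) \<and> \<not> (\<exists>S\<subseteq>A. iso_to O_obs2 S r)"

end

theory Submission
  imports Defs
begin

text \<open>If x is not up-regular, there are y, z of equal level above that of x with x < y
and x, z incomparable. Since z lies above the level of x, it has a predecessor w on the level
of x, and {x, y, w, z} consists of two minimal elements x, w below two elements y, z of level
one; it is a level-induced copy of O_obs1 or O_obs2 according to whether w < y.
Conversely, in a level-induced copy {a, b, c, d} of an obstruction, b and d have level one
in the copy, hence equal level in P, while a < b and a, d are incomparable: a is not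
up-regular.\<close>

lemma wf_order_induct [consumes 2, case_names step]:
  assumes "wf_order A r" and "x \<in> A"
    and step: "\<And>x. x \<in> A \<Longrightarrow> (\<And>y. y \<in> A \<Longrightarrow> r y x \<Longrightarrow> P y) \<Longrightarrow> P x"
  shows "P x"
proof -
  have "wfP (\<lambda>x y. x \<in> A \<and> y \<in> A \<and> r x y)"
    using assms(1) unfolding wf_order_def by blast
  then have "x \<in> A \<longrightarrow> P x"
    by (induct x rule: wfp_induct_rule) (auto intro: step)
  then show ?thesis using assms(2) by blast
qed

lemma wf_order_trans:
  "wf_order A r \<Longrightarrow> x \<in> A \<Longrightarrow> y \<in> A \<Longrightarrow> z \<in> A \<Longrightarrow> r x y \<Longrightarrow> r y z \<Longrightarrow> r x z"
  unfolding wf_order_def strict_po_on_def by blast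

lemma wf_order_subset:
  assumes "wf_order A r" and "S \<subseteq> A"
  shows "wf_order S r"
proof -
  have "wfP (\<lambda>x y. x \<in> A \<and> y \<in> A \<and> r x y)" using assms(1) unfolding wf_order_def by blast
  then have "wfP (\<lambda>x y. x \<in> S \<and> y \<in> S \<and> r x y)"
    by (rule wfp_subset) (use assms(2) in auto)
  then show ?thesis using assms unfolding wf_order_def strict_po_on_def by blast
qed

lemma level_leI:
  "x \<in> A \<Longrightarrow> y \<in> A \<Longrightarrow> (\<And>x'. x' \<in> A \<Longrightarrow> r x' x \<Longrightarrow> \<exists>y'\<in>A. r y' y \<and> level_le A r x' y')
    \<Longrightarrow> level_le A r x y"
  by (rule level_le.intros) blast+

lemma level_leD:
  "level_le A r x y \<Longrightarrow> x' \<in> A \<Longrightarrow> r x' x \<Longrightarrow> \<exists>y'\<in>A. r y' y \<and> level_le A r x' y'"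
  by (erule level_le.cases) blast

lemma level_le_carrier: "level_le A r x y \<Longrightarrow> x \<in> A \<and> y \<in> A"
  by (erule level_le.cases) auto

lemma not_level_leD:
  "\<not> level_le A r x y \<Longrightarrow> x \<in> A \<Longrightarrow> y \<in> A
    \<Longrightarrow> \<exists>x'\<in>A. r x' x \<and> (\<forall>y'\<in>A. r y' y \<longrightarrow> \<not> level_le A r x' y')"
  using level_leI by metis

lemma level_le_refl:
  assumes "wf_order A r" and "x \<in> A"
  shows "level_le A r x x"
  using assms by (induct x rule: wf_order_induct) (intro level_leI; blast)

lemma level_le_trans:
  assumes wo: "wf_order A r" and "level_le A r x y" and "level_le A r y z"
  shows "level_le A r x z"
proof -
  have "x \<in> A" using assms level_le_carrier by metis
  have "\<forall>y z. level_le A r x y \<longrightarrow> level_le A r y z \<longrightarrow> level_le A r x z"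
    using wo \<open>x \<in> A\<close>
  proof (induct x rule: wf_order_induct)
    case (step x)
    show ?case
    proof (intro allI impI)
      fix y z assume xy: "level_le A r x y" and yz: "level_le A r y z"
      show "level_le A r x z"
      proof (rule level_leI)
        fix x' assume x': "x' \<in> A" "r x' x"
        obtain y' where y': "y' \<in> A" "r y' y" "level_le A r x' y'"
          using level_leD[OF xy x'] by blast
        obtain z' where "z' \<in> A" "r z' z" "level_le A r y' z'"
          using level_leD[OF yz y'(1,2)] by blast
        then show "\<exists>z'\<in>A. r z' z \<and> level_le A r x' z'" using step(2)[OF x'] y' by blast
      qed (use step(1) level_le_carrier[OF yz] in auto)
    qed
  qed
  then show ?thesis using assms by blast
qed

lemma level_le_imp_not_rel:
  assumes wo: "wf_order A r" and "level_le A r u v"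
  shows "\<not> r v u"
proof -
  have "u \<in> A" using assms level_le_carrier by metis
  have "\<forall>v. level_le A r u v \<longrightarrow> \<not> r v u"
    using wo \<open>u \<in> A\<close>
  proof (induct u rule: wf_order_induct)
    case (step u)
    show ?case
    proof (intro allI impI notI)
      fix v assume uv: "level_le A r u v" and vu: "r v u"
      have "v \<in> A" using uv level_le_carrier by metis
      then obtain v' where "v' \<in> A" "r v' v" "level_le A r v v'"
        using level_leD[OF uv _ vu] by blast
      then show False using step(2) \<open>v \<in> A\<close> vu by blast
    qed
  qed
  then show ?thesis using assms by blast
qed

lemma rel_imp_level_le:
  assumes wo: "wf_order A r" and "x \<in> A" "y \<in> A" "r x y"
  shows "level_le A r x y"
proof (rule level_leI)
  fix x' assume "x' \<in> A" "r x' x"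
  then show "\<exists>y'\<in>A. r y' y \<and> level_le A r x' y'"
    using assms wf_order_trans[OF wo] level_le_refl[OF wo] by blast
qed (use assms in auto)

lemma rel_imp_level_less: "wf_order A r \<Longrightarrow> r x y \<Longrightarrow> level_less A r x y"
  unfolding level_less_def using level_le_imp_not_rel by metis

lemma level_less_ex_pred_level_ge:
  assumes wo: "wf_order A r" and "x \<in> A" and "y \<in> A" and "level_less A r x y"
  shows "\<exists>y'\<in>A. r y' y \<and> level_le A r x y'"
proof -
  have "\<forall>x\<in>A. level_less A r x y \<longrightarrow> (\<exists>y'\<in>A. r y' y \<and> level_le A r x y')"
    using wo \<open>y \<in> A\<close>
  proof (induct y rule: wf_order_induct)
    case (step y)
    show ?case
    proof (intro ballI impI)
      fix x assume x: "x \<in> A" and "level_less A r x y"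
      then obtain y' where y': "y' \<in> A" "r y' y" "\<forall>x'\<in>A. r x' x \<longrightarrow> \<not> level_le A r y' x'"
        using not_level_leD[OF _ step(1)] unfolding level_less_def by blast
      have "level_le A r x y'"
      proof (rule level_leI)
        fix x' assume "x' \<in> A" "r x' x"
        then show "\<exists>y''\<in>A. r y'' y' \<and> level_le A r x' y''"
          using step(2)[OF y'(1,2)] y'(3) unfolding level_less_def by blast
      qed (use x y' in auto)
      then show "\<exists>y'\<in>A. r y' y \<and> level_le A r x y'" using y' by blast
    qed
  qed
  then show ?thesis using assms by blast
qed

lemma level_less_ex_pred_level_eq:
  assumes wo: "wf_order A r" and "x \<in> A" and "y \<in> A" and "level_less A r x y"
  shows "\<exists>w\<in>A. r w y \<and> level_eq A r w x"
proof -
  have "\<forall>x\<in>A. level_less A r x y \<longrightarrow> (\<exists>w\<in>A. r w y \<and> level_eq A r w x)"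
    using wo \<open>y \<in> A\<close>
  proof (induct y rule: wf_order_induct)
    case (step y)
    show ?case
    proof (intro ballI impI)
      fix x assume x: "x \<in> A" and xy: "level_less A r x y"
      obtain y' where y': "y' \<in> A" "r y' y" "level_le A r x y'"
        using level_less_ex_pred_level_ge[OF wo x step(1) xy] by blast
      show "\<exists>w\<in>A. r w y \<and> level_eq A r w x"
      proof (cases "level_le A r y' x")
        case True
        then show ?thesis using y' unfolding level_eq_def by blast
      next
        case False
        then obtain w where "w \<in> A" "r w y'" "level_eq A r w x"
          using step(2)[OF y'(1,2)] x unfolding level_less_def by blast
        then show ?thesis using wf_order_trans[OF wo _ y'(1) step(1) _ y'(2)] by blast
      qed
    qed
  qed
  then show ?thesis using assms by blast
qed

lemma symp_level_eq: "symp (level_eq A r)"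
  unfolding symp_def level_eq_def by blast

lemma transp_level_eq: "wf_order A r \<Longrightarrow> transp (level_eq A r)"
  unfolding transp_def level_eq_def using level_le_trans by metis

lemma level_less_level_eq_trans:
  "wf_order A r \<Longrightarrow> level_less A r x y \<Longrightarrow> level_eq A r y z \<Longrightarrow> level_less A r x z"
  unfolding level_less_def level_eq_def using level_le_trans by metis

lemma level_eq_minimal:
  assumes "u \<in> S" "v \<in> S" "\<forall>p\<in>S. \<not> r p u" "\<forall>p\<in>S. \<not> r p v"
  shows "level_eq S r u v"
  unfolding level_eq_def using assms by (blast intro: level_leI)

lemma level_eq_height_one:
  assumes "u \<in> S" "v \<in> S" "\<exists>p\<in>S. r p u" "\<exists>p\<in>S. r p v"
    and "\<And>p q. p \<in> S \<Longrightarrow> q \<in> S \<Longrightarrow> r p u \<or> r p v \<Longrightarrow> \<not> r q p"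
  shows "level_eq S r u v"
  unfolding level_eq_def using assms by (blast intro: level_leI)

lemma sym_trans_two_classes:
  assumes "symp E" "transp E" "E x w" "E y z" "\<not> E x y"
    and "u \<in> {x, y, w, z}" "v \<in> {x, y, w, z}"
  shows "E u v \<longleftrightarrow> (u \<in> {x, w} \<longleftrightarrow> v \<in> {x, w})"
  using assms unfolding symp_def transp_def by blast

lemma iso_to_four:
  assumes "distinct [a, b, c, d]"
    and "\<And>i j. i \<le> 3 \<Longrightarrow> j \<le> 3 \<Longrightarrow> q i j \<longleftrightarrow> r ([a, b, c, d] ! i) ([a, b, c, d] ! j)"
  shows "iso_to q {a, b, c, d} r"
  unfolding iso_to_def
proof (intro exI conjI)
  have "{0..3::nat} = {0, 1, 2, 3}" by auto
  then show "bij_betw (\<lambda>i. [a, b, c, d] ! i) {0..3} {a, b, c, d}"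
    using assms(1) by (auto simp: bij_betw_def inj_on_def)
qed (use assms(2) in auto)

lemma level_induced_not_up_regular_elem:
  assumes wo: "wf_order A r" and li: "level_induced A r S" and "a \<in> S" "b \<in> S" "d \<in> S"
    and "r a b" "\<not> r a d" "level_eq S r b d"
  shows "\<not> up_regular_elem A r a"
proof -
  have "level_eq A r b d" using assms(4,5,8) li unfolding level_induced_def by blast
  moreover have "level_less A r a b" using rel_imp_level_less[OF wo \<open>r a b\<close>] .
  moreover have "S \<subseteq> A" using li unfolding level_induced_def by blast
  ultimately show ?thesis
    using assms(3-7) unfolding up_regular_elem_def by blast
qed

lemma up_regular_no_level_induced_obstruction:
  assumes wo: "wf_order A r" and "up_regular A r" and li: "level_induced A r S"
    and "iso_to q S r" and "O_obs1 \<le> q" and "q \<le> O_obs2"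
  shows False
proof -
  obtain f where f: "bij_betw f {0..3} S"
    and q: "\<forall>i\<in>{0..3}. \<forall>j\<in>{0..3}. q i j \<longleftrightarrow> r (f i) (f j)"
    using \<open>iso_to q S r\<close> unfolding iso_to_def by blast
  have "{0..3::nat} = {0, 1, 2, 3}" by auto
  then have S: "S = {f 0, f 1, f 2, f 3}" and distinct: "distinct [f 0, f 1, f 2, f 3]"
    using f by (auto simp: bij_betw_def inj_on_def)
  have rel: "r (f 0) (f 1)" "r (f 2) (f 3)"
    using q \<open>O_obs1 \<le> q\<close> by (auto simp: O_obs1_def le_fun_def)
  have rel_cases: "(u, v) \<in> {(f 0, f 1), (f 2, f 3), (f 2, f 1)}"
    if uv: "u \<in> S" "v \<in> S" "r u v" for u v
  proof -
    obtain i j where ij: "i \<in> {0..3}" "j \<in> {0..3}" "u = f i" "v = f j"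
      using uv(1,2) f unfolding bij_betw_def by blast
    then have "O_obs2 i j" using q \<open>r u v\<close> \<open>q \<le> O_obs2\<close> by (auto simp: le_fun_def)
    then show ?thesis using ij by (auto simp: O_obs2_def)
  qed
  have "level_eq S r (f 1) (f 3)"
  proof (rule level_eq_height_one)
    fix p p' assume "p \<in> S" "p' \<in> S" "r p (f 1) \<or> r p (f 3)"
    then have "p = f 0 \<or> p = f 2"
      using rel_cases[of p "f 1"] rel_cases[of p "f 3"] S distinct by auto
    then show "\<not> r p' p" using rel_cases[of p' p] \<open>p' \<in> S\<close> S distinct by auto
  qed (use S rel in auto)
  moreover have "\<not> r (f 0) (f 3)" using rel_cases[of "f 0" "f 3"] S distinct by auto
  ultimately have "\<not> up_regular_elem A r (f 0)"
    using level_induced_not_up_regular_elem[OF wo li _ _ _ rel(1)] S by blast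
  moreover have "f 0 \<in> A" using li S unfolding level_induced_def by blast
  ultimately show False using \<open>up_regular A r\<close> unfolding up_regular_def by blast
qed

locale two_levels =
  fixes A :: "'a set" and r :: "'a \<Rightarrow> 'a \<Rightarrow> bool" and x y w z :: 'a
  assumes wf_order: "wf_order A r"
    and carrier: "x \<in> A" "y \<in> A" "w \<in> A" "z \<in> A"
    and rel: "r x y" "r w z"
    and lower_level: "level_eq A r w x"
    and upper_level: "level_eq A r y z"
begin

lemma level_le_same:
  shows "u \<in> {x, w} \<Longrightarrow> level_le A r u x \<and> level_le A r x u"
    and "v \<in> {y, z} \<Longrightarrow> level_le A r v y \<and> level_le A r y v"
  using lower_level upper_level level_le_refl[OF wf_order] carrier unfolding level_eq_def by blast+

lemma level_le_lower:
  assumes "u \<in> {x, w}" "v \<in> {x, y, w, z}"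
  shows "level_le A r u v"
proof -
  have "level_le A r x y" using rel_imp_level_le[OF wf_order carrier(1,2) rel(1)] .
  then have "level_le A r x v"
    using assms(2) level_le_same level_le_trans[OF wf_order] by blast
  then show ?thesis using level_le_same(1)[OF assms(1)] level_le_trans[OF wf_order] by blast
qed

lemma level_le_upper:
  assumes "u \<in> {x, y, w, z}" "v \<in> {y, z}"
  shows "level_le A r u v"
proof -
  have "level_le A r x y" using rel_imp_level_le[OF wf_order carrier(1,2) rel(1)] .
  then have "level_le A r u y"
    using assms(1) level_le_same level_le_trans[OF wf_order] by blast
  then show ?thesis using level_le_same(2)[OF assms(2)] level_le_trans[OF wf_order] by blast
qed

lemma not_level_le_upper_lower:
  assumes "u \<in> {x, w}" "v \<in> {y, z}"
  shows "\<not> level_le A r v u"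
proof
  assume "level_le A r v u"
  then have "level_le A r y x"
    using level_le_same(1)[OF assms(1)] level_le_same(2)[OF assms(2)] level_le_trans[OF wf_order]
    by blast
  then show False using rel_imp_level_less[OF wf_order rel(1)] unfolding level_less_def by blast
qed

lemma no_rel:
  "\<not> r y x" "\<not> r y y" "\<not> r y w" "\<not> r y z" "\<not> r z x" "\<not> r z y" "\<not> r z w" "\<not> r z z"
  "\<not> r x x" "\<not> r x w" "\<not> r w x" "\<not> r w w"
  using level_le_imp_not_rel[OF wf_order level_le_lower] level_le_imp_not_rel[OF wf_order level_le_upper]
  by simp_all

lemma level_induced: "level_induced A r {x, y, w, z}"
proof -
  define S where "S = {x, y, w, z}"
  have "S \<subseteq> A" using carrier unfolding S_def by blast
  then have wf_order_S: "wf_order S r" using wf_order_subset[OF wf_order] by blast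
  have S_classes: "level_eq S r x w" "level_eq S r y z" "\<not> level_eq S r x y"
  proof -
    show "level_eq S r x w"
      by (rule level_eq_minimal) (use no_rel in \<open>auto simp: S_def\<close>)
    show "level_eq S r y z"
    proof (rule level_eq_height_one)
      fix p p' assume "p \<in> S" "p' \<in> S" "r p y \<or> r p z"
      then show "\<not> r p' p" using no_rel by (auto simp: S_def)
    qed (use rel in \<open>auto simp: S_def\<close>)
    show "\<not> level_eq S r x y"
      using rel_imp_level_less[OF wf_order_S rel(1)] unfolding level_less_def level_eq_def by blast
  qed
  have A_classes: "level_eq A r x w" "level_eq A r y z" "\<not> level_eq A r x y"
    using lower_level upper_level not_level_le_upper_lower[of x y] symp_level_eq
    unfolding level_eq_def by (auto dest: sympD)
  show ?thesis
    unfolding level_induced_def S_def[symmetric]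
  proof (intro conjI ballI)
    fix u v assume "u \<in> S" "v \<in> S"
    then show "level_eq S r u v \<longleftrightarrow> level_eq A r u v"
      using sym_trans_two_classes[OF symp_level_eq transp_level_eq[OF wf_order_S] S_classes, of u v]
        sym_trans_two_classes[OF symp_level_eq transp_level_eq[OF wf_order] A_classes, of u v]
      unfolding S_def by simp
  qed fact
qed

lemma iso_to_obstruction:
  assumes "\<not> r x z"
  shows "iso_to (if r w y then O_obs2 else O_obs1) {x, y, w, z} r"
proof (rule iso_to_four)
  show "distinct [x, y, w, z]"
    using assms rel not_level_le_upper_lower level_le_lower[of x x] level_le_lower[of w w] by auto
  fix i j :: nat assume "i \<le> 3" "j \<le> 3"
  then have "i \<in> {0, 1, 2, 3}" "j \<in> {0, 1, 2, 3}" by auto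
  then show "(if r w y then O_obs2 else O_obs1) i j \<longleftrightarrow> r ([x, y, w, z] ! i) ([x, y, w, z] ! j)"
    using assms rel no_rel by (elim insertE emptyE) (simp_all add: O_obs1_def O_obs2_def)
qed

end

lemma not_up_regular_elemE:
  assumes wo: "wf_order A r" and "\<not> up_regular_elem A r x"
  obtains y z where "y \<in> A" "z \<in> A" "level_less A r x y" "level_eq A r y z" "r x y" "\<not> r x z"
proof -
  obtain y z where yz: "y \<in> A" "z \<in> A" "level_less A r x y" "level_eq A r y z" "r x y \<noteq> r x z"
    using assms(2) unfolding up_regular_elem_def by blast
  have "level_less A r x z" using level_less_level_eq_trans[OF wo yz(3,4)] .
  moreover have "level_eq A r z y" using sympD[OF symp_level_eq yz(4)] .
  ultimately show thesis
    using that[of y z] that[of z y] yz by (cases "r x y") simp_all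
qed

lemma not_up_regular_level_induced_obstruction:
  assumes wo: "wf_order A r" and "\<not> up_regular A r"
  shows "\<exists>S. level_induced A r S \<and> (iso_to O_obs1 S r \<or> iso_to O_obs2 S r)"
proof -
  obtain x where x: "x \<in> A" "\<not> up_regular_elem A r x"
    using assms(2) unfolding up_regular_def by blast
  obtain y z where yz: "y \<in> A" "z \<in> A" "level_less A r x y" "level_eq A r y z" "r x y" "\<not> r x z"
    using not_up_regular_elemE[OF wo x(2)] by blast
  have "level_less A r x z" using level_less_level_eq_trans[OF wo yz(3,4)] .
  then obtain w where w: "w \<in> A" "r w z" "level_eq A r w x"
    using level_less_ex_pred_level_eq[OF wo x(1) yz(2)] by blast
  then interpret two_levels A r x y w z
    using wo x(1) yz(1,2,4,5) by unfold_locales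
  show ?thesis using level_induced iso_to_obstruction[OF yz(6)] by (cases "r w y") auto
qed

theorem mainTheorem10:
  fixes A :: "'a set" and r :: "'a \<Rightarrow> 'a \<Rightarrow> bool"
  assumes "wf_order A r"
  shows "(up_regular A r \<longleftrightarrow>
            \<not> (\<exists>S. level_induced A r S \<and> iso_to O_obs1 S r) \<and>
            \<not> (\<exists>S. level_induced A r S \<and> iso_to O_obs2 S r))
         \<and> (itov A r \<longrightarrow> up_regular A r)"
proof -
  have "\<not> (level_induced A r S \<and> iso_to q S r)"
    if "up_regular A r" "O_obs1 \<le> q" "q \<le> O_obs2" for S q
    using up_regular_no_level_induced_obstruction[OF assms] that by blast
  moreover have "O_obs1 \<le> O_obs2"
    by (auto simp: le_fun_def O_obs1_def O_obs2_def)
  ultimately have "up_regular A r \<longleftrightarrow>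
            \<not> (\<exists>S. level_induced A r S \<and> iso_to O_obs1 S r) \<and>
            \<not> (\<exists>S. level_induced A r S \<and> iso_to O_obs2 S r)"
    using not_up_regular_level_induced_obstruction[OF assms] by blast
  moreover have "itov A r \<longrightarrow> up_regular A r"
    using not_up_regular_level_induced_obstruction[OF assms]
    unfolding itov_def level_induced_def by blast
  ultimately show ?thesis by blast
qed

end
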